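(* Every weakly-reversible chemical reaction network that is not catalytic is persistent.
   Context: A chemical reaction network (CRN) consists of positive integers $s,n$, a finite directed graph $G$ with vertex set $\{1,\dots,n\}$ and edge set $E(G)$, and an injective labeling of vertex $i$ by a monic monomial $\psi_i(x)=\prod_{j=1}^s x_j^{y_{ij}}$; let $Y=(y_{ij})$ be the $n\times s$ exponent matrix and $\psi(x)=(\psi_1(x),\dots,\psi_n(x))$. $G$ is weakly-reversible iff each connected component is strongly connected. A mass action system is a CRN with a weight function $k:E(G)\to\mathbb{R}_{>0}$; its dynamics are $\frac{dx}{dt}=\psi(x)\,A_k\,Y$, where $A_k$ is the $n\times n$ matrix with $(i,j)$ entry $k(i,j)$ for $(i,j)\in E(G)$, $i\ne j$, $0$ for other off-diagonal entries, and diagonal chosen so that all row sums are zero. The omega-limit set of $x:\mathbb{R}_{\ge0}\to\mathbb{R}^s$ is the set of $y\in\mathbb{R}^s$ for which there is an increasing sequence $t_m\to\infty$ with $x(t_m)\to y$. The CRN is persistent iff for every $k:E(G)\to\mathbb{R}_{>0}$ and every solution $x:\mathbb{R}_{\ge0}\to\mathbb{R}^s_{>0}$ of the associated dynamics, the omega-limit set of $x$ does not meet the boundary $\partial\mathbb{R}^s_{\ge0}$. The event-graph $\overline{G}$ has as vertices all monic monomials in $x_1,\dots,x_s$, with an edge $(N\psi_i,N\psi_j)$ for each $(i,j)\in E(G)$ and each monic monomial $N$. A weakly-reversible CRN is catalytic iff there exist monic monomials $M,N$ path-connected in $\overline{G}$ such that $M/\gcd(M,N)$ and $N/\gcd(M,N)$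 are not path-connected in $\overline{G}$. *)

theory Defs
  imports "HOL-Analysis.Analysis"
begin

text \<open>Species are indexed by a finite type 's (so s = CARD('s) \<ge> 1), the state space
  R^s is real^'s.  A monic monomial in x_1..x_s is represented by its exponent vector
  's \<Rightarrow> nat; Y i is the exponent vector labelling vertex i.\<close>

type_synonym 's monomial = "'s \<Rightarrow> nat"

definition crn :: "nat \<Rightarrow> (nat \<times> nat) set \<Rightarrow> (nat \<Rightarrow> 's::finite monomial) \<Rightarrow> bool" where
  "crn n E Y \<longleftrightarrow> n \<ge> 1 \<and> E \<subseteq> {1..n} \<times> {1..n} \<and> inj_on Y {1..n}"

definition weakly_reversible :: "nat \<Rightarrow> (nat \<times> nat) set \<Rightarrow> bool" where
  "weakly_reversible n E \<longleftrightarrow>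
     (\<forall>u\<in>{1..n}. \<forall>v\<in>{1..n}. (u, v) \<in> (E \<union> E\<inverse>)\<^sup>* \<longrightarrow> (u, v) \<in> E\<^sup>*)"

definition mono_eval :: "'s::finite monomial \<Rightarrow> real ^ 's \<Rightarrow> real" where
  "mono_eval y x = (\<Prod>j\<in>UNIV. (x $ j) ^ (y j))"

definition Ak :: "nat \<Rightarrow> (nat \<times> nat) set \<Rightarrow> (nat \<times> nat \<Rightarrow> real) \<Rightarrow> nat \<Rightarrow> nat \<Rightarrow> real" where
  "Ak n E k i j =
     (if i \<noteq> j then (if (i, j) \<in> E then k (i, j) else 0)
      else - (\<Sum>l\<in>{1..n} - {i}. if (i, l) \<in> E then k (i, l) else 0))"

definition mass_action_field ::
  "nat \<Rightarrow> (nat \<times> nat) set \<Rightarrow> (nat \<Rightarrow> 's::finite monomial) \<Rightarrow> (nat \<times> nat \<Rightarrow> real)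
     \<Rightarrow> real ^ 's \<Rightarrow> real ^ 's" where
  "mass_action_field n E Y k x =
     (\<chi> j. \<Sum>i\<in>{1..n}. \<Sum>l\<in>{1..n}. mono_eval (Y i) x * Ak n E k i l * real (Y l j))"

definition omega_limit :: "(real \<Rightarrow> real ^ 's::finite) \<Rightarrow> (real ^ 's) set" where
  "omega_limit x = {y. \<exists>t :: nat \<Rightarrow> real. strict_mono t \<and> (\<forall>m. t m \<ge> 0) \<and>
       filterlim t at_top sequentially \<and> (\<lambda>m. x (t m)) \<longlonglongrightarrow> y}"

definition pos_orthant :: "(real ^ 's::finite) set" where
  "pos_orthant = {y. \<forall>j. y $ j > 0}"

definition orthant_boundary :: "(real ^ 's::finite) set" where
  "orthant_boundary = frontier {y. \<forall>j. y $ j \<ge> 0}"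

definition persistent :: "nat \<Rightarrow> (nat \<times> nat) set \<Rightarrow> (nat \<Rightarrow> 's::finite monomial) \<Rightarrow> bool" where
  "persistent n E Y \<longleftrightarrow>
     (\<forall>k :: nat \<times> nat \<Rightarrow> real. (\<forall>e\<in>E. k e > 0) \<longrightarrow>
       (\<forall>x :: real \<Rightarrow> real ^ 's.
          ((\<forall>t\<ge>0. x t \<in> pos_orthant) \<and>
           (\<forall>t\<ge>0. (x has_vector_derivative mass_action_field n E Y k (x t)) (at t within {0..})))
          \<longrightarrow> omega_limit x \<inter> orthant_boundary = {}))"

text \<open>Event graph: vertices all monic monomials, edges (N psi_i, N psi_j) (product = sum
  of exponent vectors).\<close>
definition event_edges :: "(nat \<times> nat) set \<Rightarrow> (nat \<Rightarrow> 's monomial) \<Rightarrow> ('s monomial \<times> 's monomial) set" where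
  "event_edges E Y = {((\<lambda>s. N s + Y i s), (\<lambda>s. N s + Y j s)) | N i j. (i, j) \<in> E}"

text \<open>Path-connected in the event graph (directed reachability; for weakly-reversible
  networks this coincides with undirected connectivity).\<close>
definition event_connected :: "(nat \<times> nat) set \<Rightarrow> (nat \<Rightarrow> 's monomial) \<Rightarrow> 's monomial \<Rightarrow> 's monomial \<Rightarrow> bool" where
  "event_connected E Y M N \<longleftrightarrow> (M, N) \<in> (event_edges E Y)\<^sup>*"

definition mono_gcd :: "'s monomial \<Rightarrow> 's monomial \<Rightarrow> 's monomial" where
  "mono_gcd M N = (\<lambda>j. min (M j) (N j))"

definition mono_div :: "'s monomial \<Rightarrow> 's monomial \<Rightarrow> 's monomial" where
  "mono_div M D = (\<lambda>j. M j - D j)"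

definition catalytic :: "(nat \<times> nat) set \<Rightarrow> (nat \<Rightarrow> 's monomial) \<Rightarrow> bool" where
  "catalytic E Y \<longleftrightarrow> (\<exists>M N. event_connected E Y M N \<and>
      \<not> event_connected E Y (mono_div M (mono_gcd M N)) (mono_div N (mono_gcd M N)))"

end

(*
  Suppose a positive trajectory has an omega-limit point y on the boundary of the orthant and
  let Z be the set of species vanishing at y.  If some reaction whose source avoids Z produced a
  species of Z, the field would push that species strictly upwards near y and the trajectory
  could not come back to y; hence Z is a siphon.  Integer combinations of reaction vectors are
  exponent differences of connected monomials in the event graph (weak reversibility supplies
  the negative coefficients), and for a non-catalytic network such a difference can never be
  positive on a siphon.  A theorem of the alternative then yields a nonzero nonnegative
  conservation law supported on Z: it is positive along the trajectory but vanishes at y.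
*)
theory Submission
  imports Defs "HOL-Library.Function_Algebras"
begin

lemma event_edgeI: "(i, j) \<in> E \<Longrightarrow> (N + Y i, N + Y j) \<in> event_edges E Y"
  unfolding event_edges_def plus_fun_def by blast

lemma event_edgeE:
  assumes "(M, N) \<in> event_edges E Y"
  obtains R i j where "(i, j) \<in> E" "M = R + Y i" "N = R + Y j"
  using assms unfolding event_edges_def plus_fun_def by blast

lemma event_connected_refl [simp]: "event_connected E Y M M"
  by (simp add: event_connected_def)

lemma event_connected_trans:
  "event_connected E Y L M \<Longrightarrow> event_connected E Y M N \<Longrightarrow> event_connected E Y L N"
  unfolding event_connected_def by (rule rtrancl_trans)

lemma event_connected_add_right:
  assumes "event_connected E Y M N"
  shows "event_connected E Y (M + R) (N + R)"
  using assms unfolding event_connected_def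
proof (induction rule: rtrancl_induct)
  case (step N1 N2)
  from step(2) obtain S i j where "(i, j) \<in> E" "N1 = S + Y i" "N2 = S + Y j"
    by (rule event_edgeE)
  then have "(N1 + R, N2 + R) \<in> event_edges E Y"
    using event_edgeI[of i j E "S + R" Y] by (simp add: ac_simps)
  with step(3) show ?case by (rule rtrancl_into_rtrancl)
qed simp

lemma event_connected_add:
  assumes "event_connected E Y M1 N1" and "event_connected E Y M2 N2"
  shows "event_connected E Y (M1 + M2) (N1 + N2)"
proof -
  have "event_connected E Y (M1 + M2) (N1 + M2)"
    using assms(1) by (rule event_connected_add_right)
  moreover have "event_connected E Y (M2 + N1) (N2 + N1)"
    using assms(2) by (rule event_connected_add_right)
  ultimately show ?thesis by (metis add.commute event_connected_trans)
qed

lemma event_connected_reactions: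
  "(i, j) \<in> E\<^sup>* \<Longrightarrow> event_connected E Y (N + Y i) (N + Y j)"
  unfolding event_connected_def
proof (induction rule: rtrancl_induct)
  case (step j l)
  then show ?case by (meson event_edgeI rtrancl_into_rtrancl)
qed simp

lemma event_connected_sym:
  assumes "crn n E Y" and "weakly_reversible n E" and "event_connected E Y M N"
  shows "event_connected E Y N M"
  using assms(3) unfolding event_connected_def
proof (induction rule: rtrancl_induct)
  case (step N1 N2)
  from step(2) obtain R i j where ij: "(i, j) \<in> E" "N1 = R + Y i" "N2 = R + Y j"
    by (rule event_edgeE)
  have "(j, i) \<in> (E \<union> E\<inverse>)\<^sup>*" using ij(1) by auto
  moreover have "i \<in> {1..n}" "j \<in> {1..n}" using ij(1) assms(1) by (auto simp: crn_def)
  ultimately have "(j, i) \<in> E\<^sup>*" using assms(2) by (auto simp: weakly_reversible_def)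
  then have "(N2, N1) \<in> (event_edges E Y)\<^sup>*"
    using event_connected_reactions ij(2,3) by (metis event_connected_def)
  then show ?case using step(3) by (rule rtrancl_trans)
qed simp

lemma event_connected_cancel:
  assumes "\<not> catalytic E Y" and "event_connected E Y (P + R) (Q + R)"
    and coprime: "\<And>s. P s = 0 \<or> Q s = 0"
  shows "event_connected E Y P Q"
proof -
  have "mono_gcd (P + R) (Q + R) = R"
  proof
    fix s show "mono_gcd (P + R) (Q + R) s = R s"
      using coprime[of s] by (auto simp: mono_gcd_def)
  qed
  moreover have "mono_div (P + R) R = P" "mono_div (Q + R) R = Q"
    by (auto simp: mono_div_def)
  ultimately show ?thesis using assms(1,2) unfolding catalytic_def by metis
qed

definition exponent_diff :: "'s monomial \<Rightarrow> 's monomial \<Rightarrow> 's \<Rightarrow> int" where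
  "exponent_diff P Q = (\<lambda>j. int (P j) - int (Q j))"

definition event_lattice :: "(nat \<times> nat) set \<Rightarrow> (nat \<Rightarrow> 's monomial) \<Rightarrow> ('s \<Rightarrow> int) set" where
  "event_lattice E Y = {exponent_diff P Q | P Q. event_connected E Y Q P}"

lemma zero_in_event_lattice: "0 \<in> event_lattice E Y"
proof -
  have "exponent_diff 0 0 = 0" by (simp add: exponent_diff_def fun_eq_iff)
  then show ?thesis unfolding event_lattice_def by force
qed

lemma add_in_event_lattice:
  assumes "U \<in> event_lattice E Y" and "V \<in> event_lattice E Y"
  shows "U + V \<in> event_lattice E Y"
proof -
  obtain P Q P' Q' where "event_connected E Y Q P" "U = exponent_diff P Q"
    "event_connected E Y Q' P'" "V = exponent_diff P' Q'"
    using assms unfolding event_lattice_def by blast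
  moreover have "U + V = exponent_diff (P + P') (Q + Q')"
    using \<open>U = _\<close> \<open>V = _\<close> by (simp add: exponent_diff_def fun_eq_iff)
  ultimately show ?thesis unfolding event_lattice_def by (blast intro: event_connected_add)
qed

lemma uminus_in_event_lattice:
  assumes "crn n E Y" and "weakly_reversible n E" and "U \<in> event_lattice E Y"
  shows "- U \<in> event_lattice E Y"
proof -
  obtain P Q where "event_connected E Y Q P" "U = exponent_diff P Q"
    using assms(3) unfolding event_lattice_def by blast
  moreover have "- U = exponent_diff Q P"
    using \<open>U = _\<close> by (simp add: exponent_diff_def fun_eq_iff)
  ultimately show ?thesis unfolding event_lattice_def
    by (blast intro: event_connected_sym[OF assms(1,2)])
qed

lemma int_mult_in_event_lattice:
  assumes "crn n E Y" and "weakly_reversible n E" and U: "U \<in> event_lattice E Y"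
  shows "(\<lambda>j. c * U j) \<in> event_lattice E Y"
proof -
  have nat_mult: "(\<lambda>j. int m * U j) \<in> event_lattice E Y" for m
  proof (induction m)
    case (Suc m)
    then have "(\<lambda>j. int m * U j) + U \<in> event_lattice E Y" using U by (rule add_in_event_lattice)
    then show ?case by (simp add: plus_fun_def algebra_simps)
  qed (use zero_in_event_lattice in \<open>simp add: zero_fun_def\<close>)
  show ?thesis
  proof (cases "c \<ge> 0")
    case True
    then show ?thesis using nat_mult[of "nat c"] by simp
  next
    case False
    then have "(\<lambda>j. c * U j) = - (\<lambda>j. int (nat (- c)) * U j)"
      by (simp add: fun_eq_iff)
    then show ?thesis
      using uminus_in_event_lattice[OF assms(1,2) nat_mult[of "nat (- c)"]] by simp
  qed
qed

lemma int_combination_in_event_lattice: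
  assumes "crn n E Y" and "weakly_reversible n E" and "finite I"
    and "\<And>i. i \<in> I \<Longrightarrow> U i \<in> event_lattice E Y"
  shows "(\<lambda>j. \<Sum>i\<in>I. c i * U i j) \<in> event_lattice E Y"
  using assms(3,4)
proof (induction I rule: finite_induct)
  case empty
  then show ?case using zero_in_event_lattice by (simp add: zero_fun_def)
next
  case (insert i I)
  have "(\<lambda>j. c i * U i j) + (\<lambda>j. \<Sum>i\<in>I. c i * U i j) \<in> event_lattice E Y"
    using insert by (intro add_in_event_lattice int_mult_in_event_lattice[OF assms(1,2)]) auto
  then show ?case using insert(1,2) by (simp add: plus_fun_def)
qed

lemma reaction_in_event_lattice:
  assumes "(i, l) \<in> E"
  shows "exponent_diff (Y l) (Y i) \<in> event_lattice E Y"
proof -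
  have "event_connected E Y (Y i) (Y l)"
    using event_connected_reactions[of i l E Y 0] assms by auto
  then show ?thesis unfolding event_lattice_def by auto
qed

definition siphon :: "(nat \<times> nat) set \<Rightarrow> (nat \<Rightarrow> 's monomial) \<Rightarrow> 's set \<Rightarrow> bool" where
  "siphon E Y Z \<longleftrightarrow> (\<forall>(i, l) \<in> E. (\<exists>j\<in>Z. 0 < Y l j) \<longrightarrow> (\<exists>j\<in>Z. 0 < Y i j))"

lemma siphon_event_connected:
  assumes "siphon E Y Z" and "event_connected E Y M N" and "\<forall>j\<in>Z. M j = 0"
  shows "\<forall>j\<in>Z. N j = 0"
  using assms(2,3) unfolding event_connected_def
proof (induction rule: rtrancl_induct)
  case (step N1 N2)
  from step(2) obtain R i l where il: "(i, l) \<in> E" "N1 = R + Y i" "N2 = R + Y l"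
    by (rule event_edgeE)
  have "\<forall>j\<in>Z. R j = 0" "\<forall>j\<in>Z. Y i j = 0" using step(3,4) il(2) by auto
  moreover have "\<forall>j\<in>Z. Y l j = 0"
    using assms(1) il(1) \<open>\<forall>j\<in>Z. Y i j = 0\<close> unfolding siphon_def by fastforce
  ultimately show ?case using il(3) by simp
qed

text \<open>Split U into coprime positive and negative parts; non-catalysis connects the negative
  part to the positive one, and the siphon propagates vanishing on Z along that path.\<close>
lemma event_lattice_nonneg_on_siphon:
  assumes "\<not> catalytic E Y" and "siphon E Y Z" and "U \<in> event_lattice E Y"
    and "\<forall>j\<in>Z. 0 \<le> U j"
  shows "\<forall>j\<in>Z. U j = 0"
proof -
  obtain P Q where PQ: "event_connected E Y Q P" "U = exponent_diff P Q"
    using assms(3) unfolding event_lattice_def by blast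
  define P' where "P' = (\<lambda>j. nat (U j))"
  define Q' where "Q' = (\<lambda>j. nat (- U j))"
  have "P' + Q = Q' + P" "Q' + Q = Q + Q'"
    using PQ(2) by (auto simp: P'_def Q'_def exponent_diff_def fun_eq_iff)
  then have "event_connected E Y (Q' + Q) (P' + Q)"
    using event_connected_add_right[OF PQ(1), of Q'] by (simp add: add.commute)
  then have "event_connected E Y Q' P'"
    by (rule event_connected_cancel[OF assms(1)]) (auto simp: P'_def Q'_def)
  moreover have "\<forall>j\<in>Z. Q' j = 0" using assms(4) by (simp add: Q'_def)
  ultimately have "\<forall>j\<in>Z. P' j = 0" by (rule siphon_event_connected[OF assms(2)])
  then show ?thesis using assms(4) by (fastforce simp: P'_def intro: antisym)
qed

lemma subspace_range_sum_scaleR: "subspace (range (\<lambda>c. \<Sum>i\<in>I. c i *\<^sub>R v i))"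
  unfolding subspace_def
proof (intro conjI ballI allI)
  show "0 \<in> range (\<lambda>c. \<Sum>i\<in>I. c i *\<^sub>R v i)" by (auto intro: image_eqI[of _ _ "\<lambda>_. 0"])
next
  fix x y assume "x \<in> range (\<lambda>c. \<Sum>i\<in>I. c i *\<^sub>R v i)" "y \<in> range (\<lambda>c. \<Sum>i\<in>I. c i *\<^sub>R v i)"
  then obtain c d where "x = (\<Sum>i\<in>I. c i *\<^sub>R v i)" "y = (\<Sum>i\<in>I. d i *\<^sub>R v i)" by blast
  then have "x + y = (\<Sum>i\<in>I. (c i + d i) *\<^sub>R v i)" by (simp add: sum.distrib scaleR_add_left)
  then show "x + y \<in> range (\<lambda>c. \<Sum>i\<in>I. c i *\<^sub>R v i)"
    by (intro image_eqI[where x = "\<lambda>i. c i + d i"]) auto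
next
  fix t :: real and x assume "x \<in> range (\<lambda>c. \<Sum>i\<in>I. c i *\<^sub>R v i)"
  then obtain c where "x = (\<Sum>i\<in>I. c i *\<^sub>R v i)" by blast
  then have "t *\<^sub>R x = (\<Sum>i\<in>I. (t * c i) *\<^sub>R v i)" by (simp add: scaleR_sum_right)
  then show "t *\<^sub>R x \<in> range (\<lambda>c. \<Sum>i\<in>I. c i *\<^sub>R v i)"
    by (intro image_eqI[where x = "\<lambda>i. t * c i"]) auto
qed

lemma orthogonal_comp_range_sum_scaleR:
  fixes v :: "'i \<Rightarrow> 'a::real_inner"
  assumes "finite I"
  shows "(range (\<lambda>c. \<Sum>i\<in>I. c i *\<^sub>R v i))\<^sup>\<bottom> = {w. \<forall>i\<in>I. v i \<bullet> w = 0}"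
proof (intro set_eqI iffI)
  fix w assume w: "w \<in> (range (\<lambda>c. \<Sum>i\<in>I. c i *\<^sub>R v i))\<^sup>\<bottom>"
  have "v i \<in> range (\<lambda>c. \<Sum>i\<in>I. c i *\<^sub>R v i)" if "i \<in> I" for i
  proof -
    have "(\<Sum>k\<in>I. (if k = i then 1 else 0) *\<^sub>R v k) = (\<Sum>k\<in>I. if k = i then v k else 0)"
      by (rule sum.cong) auto
    also have "\<dots> = v i" using that assms by simp
    finally show ?thesis by (intro image_eqI[where x = "\<lambda>k. if k = i then 1 else 0"]) simp_all
  qed
  then show "w \<in> {w. \<forall>i\<in>I. v i \<bullet> w = 0}"
    using w unfolding orthogonal_comp_def orthogonal_def by blast
qed (auto simp: orthogonal_comp_def orthogonal_def inner_sum_left)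

lemma convex_hull_axes_nonneg:
  assumes "w \<in> convex hull ((\<lambda>j. axis j (1::real)) ` Z)"
  shows "(\<forall>k. 0 \<le> w $ k) \<and> (\<forall>k. k \<notin> Z \<longrightarrow> w $ k = 0) \<and> w \<noteq> 0"
proof -
  define A where "A = (\<lambda>j. axis j (1::real)) ` Z"
  have "finite A" by (simp add: A_def)
  then obtain u where u: "\<forall>x\<in>A. 0 \<le> u x" "sum u A = 1" "w = (\<Sum>x\<in>A. u x *\<^sub>R x)"
    using assms by (auto simp: A_def convex_hull_finite)
  have "w $ k = (\<Sum>x\<in>A. u x * x $ k)" for k using u(3) by simp
  moreover have "x $ k \<ge> 0" "k \<notin> Z \<Longrightarrow> x $ k = 0" if "x \<in> A" for x k
    using that by (auto simp: A_def axis_def)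
  moreover have "w \<bullet> (\<chi> k. 1) = 1"
  proof -
    have "w \<bullet> (\<chi> k. 1) = (\<Sum>x\<in>A. u x * (x \<bullet> (\<chi> k. 1)))" using u(3) by (simp add: inner_sum_left)
    also have "\<dots> = sum u A" by (rule sum.cong) (auto simp: A_def inner_axis')
    finally show ?thesis using u(2) by simp
  qed
  ultimately show ?thesis using u(1) by (auto intro!: sum_nonneg)
qed

text \<open>A theorem of the alternative: separate the simplex on Z from the vectors orthogonal to
  all v i; the normal of the separating hyperplane is orthogonal to that complement, hence a
  combination of the v i.\<close>
lemma positive_combination_if_no_nonneg_orthogonal:
  fixes v :: "'i \<Rightarrow> real^'n" and Z :: "'n set"
  assumes "finite I" and "Z \<noteq> {}"
    and no_orthogonal: "\<not> (\<exists>w. (\<forall>j. 0 \<le> w $ j) \<and> (\<forall>j. j \<notin> Z \<longrightarrow> w $ j = 0) \<and> w \<noteq> 0 \<and>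
                               (\<forall>i\<in>I. v i \<bullet> w = 0))"
  shows "\<exists>c. \<forall>j\<in>Z. 0 < (\<Sum>i\<in>I. c i *\<^sub>R v i) $ j"
proof -
  define A where "A = (\<lambda>j. axis j (1::real)) ` Z"
  define W where "W = range (\<lambda>c. \<Sum>i\<in>I. c i *\<^sub>R v i)"
  have disjoint: "convex hull A \<inter> W\<^sup>\<bottom> = {}"
    using convex_hull_axes_nonneg orthogonal_comp_range_sum_scaleR[OF assms(1)] no_orthogonal
    unfolding A_def W_def by blast
  have "convex hull A \<noteq> {}" using assms(2) by (simp add: A_def)
  moreover have "compact (convex hull A)" by (simp add: A_def finite_imp_compact_convex_hull)
  moreover have "convex (W\<^sup>\<bottom>)" "closed (W\<^sup>\<bottom>)"
    by (simp_all add: subspace_orthogonal_comp subspace_imp_convex closed_subspace)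
  ultimately obtain a b where a_A: "\<forall>x\<in>convex hull A. a \<bullet> x < b" and a_W: "\<forall>x\<in>W\<^sup>\<bottom>. b < a \<bullet> x"
    using separating_hyperplane_compact_closed[OF convex_convex_hull _ _ _ _ disjoint] by blast
  have "0 \<in> W\<^sup>\<bottom>" by (simp add: subspace_0 subspace_orthogonal_comp)
  then have "b < 0" using a_W by fastforce
  have a_perp: "q \<bullet> a = 0" if q: "q \<in> W\<^sup>\<bottom>" for q
  proof (rule ccontr)
    assume nz: "q \<bullet> a \<noteq> 0"
    define t where "t = (b - 1) / (q \<bullet> a)"
    have "t *\<^sub>R q \<in> W\<^sup>\<bottom>" using subspace_orthogonal_comp q by (rule subspace_scale)
    then have "b < a \<bullet> (t *\<^sub>R q)" using a_W by blast
    moreover have "a \<bullet> (t *\<^sub>R q) = b - 1" using nz by (simp add: t_def inner_commute)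
    ultimately show False by simp
  qed
  have "a \<in> W"
    using a_perp orthogonal_comp_self[OF subspace_range_sum_scaleR[where I = I and v = v]]
    by (auto simp: W_def orthogonal_comp_def orthogonal_def)
  then have "- a \<in> W" by (simp add: W_def subspace_neg subspace_range_sum_scaleR)
  then obtain c where c: "- a = (\<Sum>i\<in>I. c i *\<^sub>R v i)" unfolding W_def by blast
  have "0 < (- a) $ j" if "j \<in> Z" for j
  proof -
    have "axis j 1 \<in> convex hull A" using that by (simp add: A_def hull_inc)
    then have "a \<bullet> axis j 1 < b" using a_A by blast
    then show ?thesis using \<open>b < 0\<close> by (simp add: inner_axis)
  qed
  then show ?thesis using c by metis
qed

text \<open>Scale by a large m and round the coefficients down: the rounding error in component j
  is at most the sum of the absolute values of V i j.\<close>
lemma integer_combination_positive_on: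
  fixes V :: "'i \<Rightarrow> 'n::finite \<Rightarrow> int" and c :: "'i \<Rightarrow> real" and Z :: "'n set"
  assumes "finite I" and pos: "\<forall>j\<in>Z. 0 < (\<Sum>i\<in>I. c i * of_int (V i j))"
  shows "\<exists>d. \<forall>j\<in>Z. 0 < (\<Sum>i\<in>I. d i * V i j)"
proof -
  define a where "a j = (\<Sum>i\<in>I. c i * of_int (V i j))" for j
  define B where "B j = (\<Sum>i\<in>I. \<bar>of_int (V i j)\<bar> :: real)" for j
  obtain m :: nat where m: "(\<Sum>j\<in>Z. B j / a j) < m" using reals_Archimedean2 by blast
  have B_less: "B j < m * a j" if "j \<in> Z" for j
  proof -
    have "0 < a j" using pos that by (simp add: a_def)
    have "B j / a j \<le> (\<Sum>j\<in>Z. B j / a j)"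
      using that pos by (intro member_le_sum) (auto simp: a_def B_def intro!: divide_nonneg_pos sum_nonneg)
    then have "B j / a j < m" using m by linarith
    then show ?thesis using \<open>0 < a j\<close> by (simp add: pos_divide_less_eq mult.commute)
  qed
  define d where "d i = \<lfloor>m * c i\<rfloor>" for i
  have "0 < (\<Sum>i\<in>I. d i * V i j)" if "j \<in> Z" for j
  proof -
    have frac: "(m * c i - d i) * of_int (V i j) \<le> \<bar>of_int (V i j)\<bar>" for i
    proof -
      have f: "0 \<le> m * c i - d i" "m * c i - d i \<le> 1" unfolding d_def by linarith+
      have "(m * c i - d i) * of_int (V i j) \<le> (m * c i - d i) * \<bar>of_int (V i j)\<bar>"
        using f(1) by (intro mult_left_mono) auto
      also have "\<dots> \<le> \<bar>of_int (V i j)\<bar>" using f by (intro mult_left_le_one_le) auto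
      finally show ?thesis .
    qed
    have "of_int (\<Sum>i\<in>I. d i * V i j) = m * a j - (\<Sum>i\<in>I. (m * c i - d i) * of_int (V i j))"
      by (simp add: a_def sum_distrib_left sum_subtractf algebra_simps)
    also have "\<dots> \<ge> m * a j - B j"
      unfolding B_def using frac by (simp add: sum_mono)
    finally show ?thesis using B_less[OF that] by linarith
  qed
  then show ?thesis by blast
qed

definition reaction_vector :: "(nat \<Rightarrow> 's::finite monomial) \<Rightarrow> nat \<times> nat \<Rightarrow> real ^ 's" where
  "reaction_vector Y e = (\<chi> j. real (Y (snd e) j) - real (Y (fst e) j))"

lemma mass_action_field_eq_sum_reactions:
  assumes "E \<subseteq> {1..n} \<times> {1..n}"
  shows "mass_action_field n E Y k z =
    (\<Sum>e\<in>E. (k e * mono_eval (Y (fst e)) z) *\<^sub>R reaction_vector Y e)"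
  unfolding vec_eq_iff
proof
  fix j
  define kk where "kk i l = (if (i, l) \<in> E then k (i, l) else 0)" for i l
  define g where "g i l = kk i l * mono_eval (Y i) z * (real (Y l j) - real (Y i j))" for i l
  have row: "(\<Sum>l\<in>{1..n}. mono_eval (Y i) z * Ak n E k i l * real (Y l j)) = (\<Sum>l\<in>{1..n}. g i l)"
    if i: "i \<in> {1..n}" for i
  proof -
    have "(\<Sum>l\<in>{1..n}. mono_eval (Y i) z * Ak n E k i l * real (Y l j))
        = mono_eval (Y i) z * (Ak n E k i i * real (Y i j) + (\<Sum>l\<in>{1..n} - {i}. kk i l * real (Y l j)))"
      using i by (simp add: sum.remove sum_distrib_left Ak_def kk_def mult.assoc right_diff_distrib)
    also have "\<dots> = (\<Sum>l\<in>{1..n} - {i}. g i l)"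
      by (simp add: Ak_def kk_def g_def sum_distrib_left sum_distrib_right sum_subtractf algebra_simps)
    also have "\<dots> = (\<Sum>l\<in>{1..n}. g i l)"
      using i by (simp add: sum.remove g_def)
    finally show ?thesis .
  qed
  have "mass_action_field n E Y k z $ j = (\<Sum>i\<in>{1..n}. \<Sum>l\<in>{1..n}. g i l)"
    using row by (simp add: mass_action_field_def)
  also have "\<dots> = (\<Sum>e\<in>{1..n} \<times> {1..n}. g (fst e) (snd e))"
    by (simp add: sum.cartesian_product split_def)
  also have "\<dots> = (\<Sum>e\<in>E. g (fst e) (snd e))"
    using assms by (intro sum.mono_neutral_right) (auto simp: g_def kk_def)
  also have "\<dots> = (\<Sum>e\<in>E. (k e * mono_eval (Y (fst e)) z) *\<^sub>R reaction_vector Y e) $ j"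
    by (auto simp: g_def kk_def reaction_vector_def intro: sum.cong)
  finally show "mass_action_field n E Y k z $ j =
    (\<Sum>e\<in>E. (k e * mono_eval (Y (fst e)) z) *\<^sub>R reaction_vector Y e) $ j" .
qed

lemma continuous_on_mass_action_field: "continuous_on UNIV (mass_action_field n E Y k)"
  unfolding mass_action_field_def mono_eval_def by (intro continuous_intros)

lemma inner_mass_action_field_eq_0:
  assumes "crn n E Y" and "\<forall>e\<in>E. reaction_vector Y e \<bullet> w = 0"
  shows "w \<bullet> mass_action_field n E Y k z = 0"
  using assms by (simp add: mass_action_field_eq_sum_reactions crn_def inner_sum_right inner_commute)

lemma mass_action_field_component_pos:
  assumes "crn n E Y" and "\<forall>e\<in>E. 0 < k e" and nonneg: "\<forall>j. 0 \<le> y $ j"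
    and il: "(i, l) \<in> E" and "y $ j0 = 0" and "0 < Y l j0"
    and source: "\<forall>j. y $ j = 0 \<longrightarrow> Y i j = 0"
  shows "0 < mass_action_field n E Y k y $ j0"
proof -
  define f where "f e = k e * mono_eval (Y (fst e)) y * (real (Y (snd e) j0) - real (Y (fst e) j0))" for e
  have "finite E" using assms(1) finite_subset[of E "{1..n} \<times> {1..n}"] by (auto simp: crn_def)
  have "0 \<le> f e" if "e \<in> E" for e
  proof (cases "Y (fst e) j0 = 0")
    case True
    then show ?thesis using that assms(2) nonneg
      by (auto simp: f_def mono_eval_def intro!: mult_nonneg_nonneg prod_nonneg)
  next
    case False
    then have "mono_eval (Y (fst e)) y = 0"
      using \<open>y $ j0 = 0\<close> by (auto simp: mono_eval_def intro!: prod_zero)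
    then show ?thesis by (simp add: f_def)
  qed
  moreover have "0 < f (i, l)"
  proof -
    have "0 < y $ j ^ Y i j" for j
      using nonneg[rule_format, of j] source by (cases "y $ j = 0") auto
    then have "0 < mono_eval (Y i) y" by (simp add: mono_eval_def prod_pos)
    then show ?thesis using assms(2,6) il source \<open>y $ j0 = 0\<close> by (simp add: f_def)
  qed
  ultimately have "0 < sum f E" using \<open>finite E\<close> il by (intro sum_pos2) auto
  then show ?thesis using assms(1)
    by (simp add: mass_action_field_eq_sum_reactions crn_def f_def reaction_vector_def mult.assoc)
qed

lemma norm_diff_le_of_vector_derivative_bound:
  fixes x :: "real \<Rightarrow> 'a::real_normed_vector"
  assumes "s \<le> b"
    and "\<And>t. t \<in> {s..b} \<Longrightarrow> (x has_vector_derivative x' t) (at t within {s..b})"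
    and "\<And>t. t \<in> {s..b} \<Longrightarrow> norm (x' t) \<le> K"
  shows "norm (x s - x b) \<le> K * (b - s)"
proof -
  have "norm (x s - x b) \<le> K * norm (s - b)"
  proof (rule differentiable_bound[where f' = "\<lambda>t h. h *\<^sub>R x' t" and S = "{s..b}"])
    fix t assume t: "t \<in> {s..b}"
    show "(x has_derivative (\<lambda>h. h *\<^sub>R x' t)) (at t within {s..b})"
      using assms(2)[OF t] by (simp add: has_vector_derivative_def)
    have "onorm (\<lambda>h::real. h *\<^sub>R x' t) = norm (x' t)"
      using onorm_scaleR_left[OF bounded_linear_ident, of "x' t"] by (simp add: onorm_id)
    then show "onorm (\<lambda>h::real. h *\<^sub>R x' t) \<le> K" using assms(3)[OF t] by simp
  qed (use assms(1) in auto)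
  then show ?thesis using assms(1) by simp
qed

lemma trajectory_stays_in_cball:
  fixes x :: "real \<Rightarrow> 'a::real_normed_vector"
  assumes der: "\<And>t. t \<in> {a..b} \<Longrightarrow> (x has_vector_derivative F (x t)) (at t within {a..b})"
    and K: "\<And>z. z \<in> cball y r \<Longrightarrow> norm (F z) \<le> K"
    and "0 \<le> K" and "a \<le> b" and small: "K * (b - a) \<le> r / 4"
    and xb: "dist (x b) y < r / 2" and "t \<in> {a..b}"
  shows "x t \<in> cball y r"
proof (rule ccontr)
  assume "x t \<notin> cball y r"
  define T where "T = {a..b} \<inter> (\<lambda>t. dist (x t) y) -` {r..}"
  have cont: "continuous_on {a..b} x"
    using der has_vector_derivative_continuous continuous_on_eq_continuous_within by blast
  have "T \<noteq> {}" using \<open>t \<in> {a..b}\<close> \<open>x t \<notin> cball y r\<close> by (auto simp: T_def dist_commute)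
  moreover have "closed T" unfolding T_def
    by (rule continuous_closed_preimage) (auto intro!: continuous_intros cont)
  moreover have "bounded T" unfolding T_def by (rule bounded_subset[of "{a..b}"]) auto

  ultimately obtain t0 where t0: "t0 \<in> T" and t0_max: "\<And>t. t \<in> T \<Longrightarrow> t \<le> t0"
    using compact_attains_sup[of T] compact_eq_bounded_closed by blast
  have "a \<le> t0" "t0 \<le> b" "r \<le> dist (x t0) y" using t0 by (auto simp: T_def)
  have "0 < r" using xb zero_le_dist[of "x b" y] by linarith
  have "t0 \<noteq> b" using \<open>r \<le> dist (x t0) y\<close> xb \<open>0 < r\<close> by auto
  then have "t0 < b" using \<open>t0 \<le> b\<close> by simp
  have near_b: "norm (x s - x b) \<le> r / 4" if s: "s \<in> {t0<..b}" for s
  proof -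
    have "norm (x s - x b) \<le> K * (b - s)"
    proof (rule norm_diff_le_of_vector_derivative_bound)
      fix t assume t: "t \<in> {s..b}"
      then have "t \<in> {a..b}" using s \<open>a \<le> t0\<close> by auto
      then show "(x has_vector_derivative F (x t)) (at t within {s..b})"
        using t s \<open>a \<le> t0\<close> by (intro has_vector_derivative_within_subset[OF der]) auto
      have "t \<notin> T" using t s t0_max[of t] by force
      then have "x t \<in> cball y r" using \<open>t \<in> {a..b}\<close> by (simp add: T_def dist_commute)
      then show "norm (F (x t)) \<le> K" by (rule K)
    qed (use s in auto)
    also have "\<dots> \<le> K * (b - a)" using s \<open>a \<le> t0\<close> \<open>0 \<le> K\<close> by (auto intro!: mult_left_mono)
    finally show ?thesis using small by linarith
  qed
  have "norm (x t0 - x b) \<le> r / 4"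
    using \<open>t0 < b\<close> \<open>a \<le> t0\<close> near_b
    by (intro continuous_on_closure_norm_le[of "{t0<..b}" "\<lambda>s. x s - x b"])
       (auto intro!: continuous_intros continuous_on_subset[OF cont])
  then have "dist (x t0) y < r"
    using xb dist_triangle[of "x t0" y "x b"] \<open>0 < r\<close> by (simp add: dist_norm)
  then show False using \<open>r \<le> dist (x t0) y\<close> by simp
qed

lemma component_growth_lower_bound:
  fixes x :: "real \<Rightarrow> real^'n"
  assumes "a \<le> b"
    and der: "\<And>t. t \<in> {a..b} \<Longrightarrow> (x has_vector_derivative x' t) (at t within {a..b})"
    and lower: "\<And>t. t \<in> {a..b} \<Longrightarrow> c \<le> x' t $ j"
  shows "c * (b - a) \<le> x b $ j - x a $ j"
proof -
  have "\<exists>\<xi>\<in>{a..b}. x b $ j - x a $ j = (b - a) * x' \<xi> $ j"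
  proof (rule mvt_very_simple[OF \<open>a \<le> b\<close>, where f' = "\<lambda>t h. h * x' t $ j"])
    fix t assume "a \<le> t" "t \<le> b"
    then have "((\<lambda>t. x t $ j) has_vector_derivative x' t $ j) (at t within {a..b})"
      by (intro bounded_linear.has_vector_derivative[OF bounded_linear_vec_nth] der) auto
    then show "((\<lambda>t. x t $ j) has_derivative (\<lambda>h. h * x' t $ j)) (at t within {a..b})"
      by (simp add: has_vector_derivative_def)
  qed
  then obtain \<xi> where "\<xi> \<in> {a..b}" "x b $ j - x a $ j = (b - a) * x' \<xi> $ j" ..
  moreover have "c * (b - a) \<le> x' \<xi> $ j * (b - a)"
    using lower[OF \<open>\<xi> \<in> {a..b}\<close>] \<open>a \<le> b\<close> by (intro mult_right_mono) auto
  ultimately show ?thesis by (simp add: mult.commute)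
qed

lemma continuous_component_pos_near:
  fixes F :: "real^'n \<Rightarrow> real^'m"
  assumes cont: "continuous_on UNIV F" and "0 < F y $ j"
  obtains r c K where "0 < r" "0 < c" "0 < K"
    and "\<And>z. z \<in> cball y r \<Longrightarrow> c \<le> F z $ j \<and> norm (F z) \<le> K"
proof -
  define c where "c = F y $ j / 2"
  have "0 < c" using \<open>0 < F y $ j\<close> by (simp add: c_def)
  obtain d where "0 < d" and d: "\<And>z. dist z y < d \<Longrightarrow> dist (F z) (F y) < c"
    using cont \<open>0 < c\<close> unfolding continuous_on_iff by (metis UNIV_I)
  define r where "r = d / 2"
  have "0 < r" using \<open>0 < d\<close> by (simp add: r_def)
  have "c \<le> F z $ j" if "z \<in> cball y r" for z
  proof -
    have "dist (F z) (F y) < c" using that \<open>0 < d\<close> by (intro d) (auto simp: r_def dist_commute)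
    then have "\<bar>F z $ j - F y $ j\<bar> < c"
      using dist_vec_nth_le[of "F z" j "F y"] by (simp add: dist_real_def)
    then show ?thesis unfolding c_def by linarith
  qed
  moreover have "compact (F ` cball y r)"
    by (rule compact_continuous_image) (use cont in \<open>auto intro: continuous_on_subset\<close>)
  then obtain K where "0 < K" "\<And>z. z \<in> cball y r \<Longrightarrow> norm (F z) \<le> K"
    using compact_imp_bounded bounded_pos by (metis imageI)
  ultimately show ?thesis using that \<open>0 < r\<close> \<open>0 < c\<close> by blast
qed

lemma omega_limit_approached_after:
  assumes "y \<in> omega_limit x" and "0 < e"
  obtains b where "T \<le> b" and "dist (x b) y < e"
proof -
  obtain tt :: "nat \<Rightarrow> real" where lim: "(\<lambda>m. x (tt m)) \<longlonglongrightarrow> y"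
    and tt: "filterlim tt at_top sequentially"
    using assms(1) unfolding omega_limit_def by blast
  have "\<forall>\<^sub>F m in sequentially. T \<le> tt m" using tt by (simp add: filterlim_at_top)
  moreover have "\<forall>\<^sub>F m in sequentially. dist (x (tt m)) y < e"
    using lim \<open>0 < e\<close> by (simp add: tendsto_iff)
  ultimately have "\<forall>\<^sub>F m in sequentially. T \<le> tt m \<and> dist (x (tt m)) y < e"
    by (rule eventually_conj)
  then show ?thesis using that eventually_happens'[OF sequentially_bot] by blast
qed

text \<open>Near y the component j of the field is at least c > 0, so going back in time by \<tau>
  from a moment close to y would lower that component by c\<tau> below zero.\<close>
lemma omega_limit_field_component_nonpos:
  fixes x :: "real \<Rightarrow> real^'n"
  assumes cont: "continuous_on UNIV F"
    and der: "\<forall>t\<ge>0. (x has_vector_derivative F (x t)) (at t within {0..})"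
    and pos: "\<forall>t\<ge>0. 0 < x t $ j"
    and "y \<in> omega_limit x" and "y $ j = 0"
  shows "F y $ j \<le> 0"
proof (rule ccontr)
  assume "\<not> F y $ j \<le> 0"
  then have "0 < F y $ j" by simp
  then obtain r c K where "0 < r" "0 < c" "0 < K"
    and near_y: "\<And>z. z \<in> cball y r \<Longrightarrow> c \<le> F z $ j \<and> norm (F z) \<le> K"
    using continuous_component_pos_near[OF cont] by blast
  define \<tau> where "\<tau> = r / (4 * K)"
  have "0 < \<tau>" "K * \<tau> = r / 4" using \<open>0 < r\<close> \<open>0 < K\<close> by (simp_all add: \<tau>_def)
  have "0 < min (r / 2) (c * \<tau>)" using \<open>0 < r\<close> \<open>0 < c\<close> \<open>0 < \<tau>\<close> by simp
  then obtain b where "\<tau> \<le> b" and b: "dist (x b) y < min (r / 2) (c * \<tau>)"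
    by (rule omega_limit_approached_after[OF \<open>y \<in> omega_limit x\<close>])
  have "x b $ j < c * \<tau>"
    using b dist_vec_nth_le[of "x b" j y] \<open>y $ j = 0\<close> by (simp add: dist_real_def) linarith
  define a where "a = b - \<tau>"
  have "0 \<le> a" "a \<le> b" using \<open>\<tau> \<le> b\<close> \<open>0 < \<tau>\<close> by (simp_all add: a_def)
  have der_ab: "(x has_vector_derivative F (x t)) (at t within {a..b})" if "t \<in> {a..b}" for t
    by (rule has_vector_derivative_within_subset[of _ _ _ "{0..}"]) (use der that \<open>0 \<le> a\<close> in auto)
  have "x t \<in> cball y r" if "t \<in> {a..b}" for t
    using \<open>0 < K\<close> \<open>a \<le> b\<close> \<open>K * \<tau> = r / 4\<close> b that near_y
    by (intro trajectory_stays_in_cball[OF der_ab]) (auto simp: a_def)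
  then have "c * (b - a) \<le> x b $ j - x a $ j"
    using \<open>a \<le> b\<close> der_ab near_y by (intro component_growth_lower_bound) auto
  then have "x a $ j < 0" using \<open>x b $ j < c * \<tau>\<close> by (simp add: a_def)
  then show False using pos \<open>0 \<le> a\<close> by force
qed

lemma inner_eq_at_omega_limit:
  fixes x :: "real \<Rightarrow> real^'n"
  assumes der: "\<forall>t\<ge>0. (x has_vector_derivative F (x t)) (at t within {0..})"
    and orthogonal: "\<And>z. w \<bullet> F z = 0" and "y \<in> omega_limit x"
  shows "w \<bullet> y = w \<bullet> x 0"
proof -
  have "((\<lambda>t. w \<bullet> x t) has_derivative (\<lambda>h. 0)) (at t within {0..})" if "t \<in> {0..}" for t
    using bounded_linear.has_vector_derivative[OF bounded_linear_inner_right[of w] der[rule_format]] that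
    by (simp add: has_vector_derivative_def orthogonal)
  then obtain C where C: "\<forall>t\<in>{0..}. w \<bullet> x t = C"
    using has_derivative_zero_constant[OF convex_real_interval(1)] by blast
  obtain tt :: "nat \<Rightarrow> real" where "\<forall>m. 0 \<le> tt m" and "(\<lambda>m. x (tt m)) \<longlonglongrightarrow> y"
    using \<open>y \<in> omega_limit x\<close> unfolding omega_limit_def by blast
  then have "(\<lambda>m. C) \<longlonglongrightarrow> w \<bullet> y"
    using tendsto_inner[OF tendsto_const, of "\<lambda>m. x (tt m)" y _ w] C by simp
  then have "C = w \<bullet> y" by (simp add: LIMSEQ_const_iff)
  then show ?thesis using C by simp
qed

lemma inner_pos_if_nonneg_nonzero:
  fixes w z :: "real^'n"
  assumes "\<forall>j. 0 \<le> w $ j" and "w \<noteq> 0" and "\<forall>j. 0 < z $ j"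
  shows "0 < w \<bullet> z"
proof -
  obtain j where "w $ j \<noteq> 0" using assms(2) by (auto simp: vec_eq_iff)
  then have "0 < w $ j * z $ j" using assms(1,3) by (simp add: less_le)
  then show ?thesis
    using assms(1,3) unfolding inner_vec_def by (intro sum_pos2[where i = j]) (auto simp: less_imp_le)
qed

lemma orthant_boundary_has_zero_component:
  assumes "y \<in> orthant_boundary"
  shows "\<forall>j. 0 \<le> y $ j" and "\<exists>j. y $ j = 0"
proof -
  have closed: "closed {z :: real^'a. \<forall>j. 0 \<le> z $ j}"
    by (intro closed_Collect_all closed_Collect_le continuous_intros)
  have "open {z :: real^'a. \<forall>j. 0 < z $ j}"
    unfolding Collect_all_eq by (intro open_INT) (auto intro!: open_Collect_less continuous_intros)
  then have "{z :: real^'a. \<forall>j. 0 < z $ j} \<subseteq> interior {z. \<forall>j. 0 \<le> z $ j}"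
    by (intro interior_maximal) (auto simp: less_imp_le)
  then show "\<forall>j. 0 \<le> y $ j" "\<exists>j. y $ j = 0"
    using assms closed by (force simp: orthant_boundary_def frontier_def less_le)+
qed

lemma omega_limit_zero_components_siphon:
  assumes "crn n E Y" and "\<forall>e\<in>E. 0 < k e"
    and pos: "\<forall>t\<ge>0. x t \<in> pos_orthant"
    and der: "\<forall>t\<ge>0. (x has_vector_derivative mass_action_field n E Y k (x t)) (at t within {0..})"
    and "y \<in> omega_limit x" and nonneg: "\<forall>j. 0 \<le> y $ j"
  shows "siphon E Y {j. y $ j = 0}"
proof -
  have "\<exists>j. y $ j = 0 \<and> 0 < Y i j" if "(i, l) \<in> E" "y $ j = 0" "0 < Y l j" for i l j
  proof -
    have "mass_action_field n E Y k y $ j \<le> 0"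
      using continuous_on_mass_action_field der pos \<open>y \<in> omega_limit x\<close> \<open>y $ j = 0\<close>
      by (intro omega_limit_field_component_nonpos) (auto simp: pos_orthant_def)
    then show ?thesis
      using mass_action_field_component_pos[OF assms(1,2) nonneg] that by (force simp: not_less)
  qed
  then show ?thesis unfolding siphon_def by blast
qed

lemma siphon_conservation_law:
  fixes Y :: "nat \<Rightarrow> 's::finite monomial"
  assumes "crn n E Y" and "weakly_reversible n E" and "\<not> catalytic E Y"
    and "Z \<noteq> {}" and "siphon E Y Z"
  shows "\<exists>w::real^'s. (\<forall>j. 0 \<le> w $ j) \<and> (\<forall>j. j \<notin> Z \<longrightarrow> w $ j = 0) \<and> w \<noteq> 0 \<and>
           (\<forall>e\<in>E. reaction_vector Y e \<bullet> w = 0)"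
proof (rule ccontr)
  assume no_law: "\<not> ?thesis"
  define V where "V e = exponent_diff (Y (snd e)) (Y (fst e))" for e
  have "finite E" using assms(1) finite_subset[of E "{1..n} \<times> {1..n}"] by (auto simp: crn_def)
  then obtain c where "\<forall>j\<in>Z. 0 < (\<Sum>e\<in>E. c e *\<^sub>R reaction_vector Y e) $ j"
    using positive_combination_if_no_nonneg_orthogonal[OF _ assms(4) no_law] by blast
  then have "\<forall>j\<in>Z. 0 < (\<Sum>e\<in>E. c e * of_int (V e j))"
    by (simp add: V_def exponent_diff_def reaction_vector_def)
  then obtain d where d: "\<forall>j\<in>Z. 0 < (\<Sum>e\<in>E. d e * V e j)"
    using integer_combination_positive_on[OF \<open>finite E\<close>] by blast
  have "(\<lambda>j. \<Sum>e\<in>E. d e * V e j) \<in> event_lattice E Y"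
    using \<open>finite E\<close> reaction_in_event_lattice
    by (intro int_combination_in_event_lattice[OF assms(1,2)]) (auto simp: V_def)
  then have "\<forall>j\<in>Z. (\<Sum>e\<in>E. d e * V e j) = 0"
    using d by (intro event_lattice_nonneg_on_siphon[OF assms(3,5)]) (auto simp: less_imp_le)
  then show False using d assms(4) by fastforce
qed

theorem corollary4p2:
  fixes n :: nat and E :: "(nat \<times> nat) set" and Y :: "nat \<Rightarrow> 's::finite monomial"
  assumes "crn n E Y"
    and "weakly_reversible n E"
    and "\<not> catalytic E Y"
  shows "persistent n E Y"
  unfolding persistent_def
proof (intro allI impI)
  fix k :: "nat \<times> nat \<Rightarrow> real" and x :: "real \<Rightarrow> real ^ 's"
  assume kpos: "\<forall>e\<in>E. 0 < k e"
    and traj: "(\<forall>t\<ge>0. x t \<in> pos_orthant) \<and>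
      (\<forall>t\<ge>0. (x has_vector_derivative mass_action_field n E Y k (x t)) (at t within {0..}))"
  show "omega_limit x \<inter> orthant_boundary = {}"
  proof (rule ccontr)
    assume "omega_limit x \<inter> orthant_boundary \<noteq> {}"
    then obtain y where y: "y \<in> omega_limit x" "y \<in> orthant_boundary" by blast
    define Z where "Z = {j. y $ j = 0}"
    have "Z \<noteq> {}" "siphon E Y Z"
      using orthant_boundary_has_zero_component[OF y(2)] traj
        omega_limit_zero_components_siphon[OF assms(1) kpos _ _ y(1)]
      by (auto simp: Z_def)
    then obtain w :: "real^'s" where w: "\<forall>j. 0 \<le> w $ j" "\<forall>j. j \<notin> Z \<longrightarrow> w $ j = 0" "w \<noteq> 0"
      and law: "\<forall>e\<in>E. reaction_vector Y e \<bullet> w = 0"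
      using siphon_conservation_law[OF assms] by blast
    have "w \<bullet> y = w \<bullet> x 0"
      using traj y(1) inner_mass_action_field_eq_0[OF assms(1) law]
      by (intro inner_eq_at_omega_limit) auto
    moreover have "w \<bullet> y = 0"
      unfolding inner_vec_def by (rule sum.neutral) (use w(2) in \<open>auto simp: Z_def\<close>)
    moreover have "0 < w \<bullet> x 0"
      using w(1,3) traj by (intro inner_pos_if_nonneg_nonzero) (auto simp: pos_orthant_def)
    ultimately show False by simp
  qed
qed

end
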